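(* Let $F=(f,g)\colon \overline{\Delta}\to\overline{\Delta}^2$ be continuous, holomorphic on $\Delta$, with $F(b\Delta)\subset b(\Delta^2)$, and assume $f$ and $g$ are both nonconstant. Then for every $\xi\in b\Delta$ there is no injective sequence $(\zeta_n)$ in $b\Delta$ such that $f(\zeta_n)=\xi$ for all $n$ and such that the sequence $(g(\zeta_n))$ has a cluster point in $\Delta$. The same holds with the roles of $f$ and $g$ interchanged. Consequently, for every open face $\Phi$ of $\Delta^2$, the set $F(b\Delta)\cap\Phi$ has no cluster point in $\Phi$.
   Context: $\Delta=\{z\in\mathbb{C}: |z|<1\}$ is the open unit disc, $\overline{\Delta}$ its closure, $b\Delta$ the unit circle, $\Delta^2=\Delta\times\Delta$ and $b(\Delta^2)$ its topological boundary. An open face of $\Delta^2$ is a set of the form $\{\zeta\}\times\Delta$ or $\Delta\times\{\zeta\}$ with $\zeta\in b\Delta$. *)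

theory Defs
  imports "HOL-Analysis.Analysis"
begin

abbreviation udisc :: "complex set" where "udisc \<equiv> ball 0 1"
abbreviation cudisc :: "complex set" where "cudisc \<equiv> cball 0 1"
abbreviation ucircle :: "complex set" where "ucircle \<equiv> sphere 0 1"
abbreviation bidisc :: "(complex \<times> complex) set" where "bidisc \<equiv> udisc \<times> udisc"

definition open_face :: "(complex \<times> complex) set \<Rightarrow> bool" where
  "open_face P \<longleftrightarrow> (\<exists>z\<in>ucircle. P = {z} \<times> udisc \<or> P = udisc \<times> {z})"

definition seq_cluster_point :: "(nat \<Rightarrow> 'a::topological_space) \<Rightarrow> 'a \<Rightarrow> bool" where
  "seq_cluster_point x w \<longleftrightarrow> (\<exists>r. strict_mono r \<and> (x \<circ> r) \<longlonglongrightarrow> w)"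

end

theory Submission
  imports Defs "HOL-Complex_Analysis.Complex_Analysis"
begin

(*
  Suppose f equals the unimodular constant xi at infinitely many boundary points zeta_n while
  g(zeta_n) has a cluster point in the open disc. A subsequence of zeta_n converges to some a on the
  circle, and |g(a)| < 1, so |g| < 1 on a boundary arc around a; since F maps the circle into
  the boundary of the bidisc, |f| = 1 on that arc. Rotate a and xi to 1 and pull f back by the
  Cayley map of the upper half-plane onto the disc: cayley_inv o f o cayley is then real on a
  real interval around 0, so by Schwarz reflection it extends holomorphically across the real
  axis. Its zeros, coming from the zeta_n, accumulate at 0, so it vanishes identically and f = xi,
  contradicting nonconstancy. A cluster point of F(bD) in an open face {xi} x D yields exactly
  such a sequence; for faces D x {xi} swap the roles of f and g.
*)

lemma islimpt_of_tendsto_finite_fibres: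
  assumes lim: "x \<longlonglongrightarrow> a" and in_S: "\<And>n. x n \<in> S" and finite_fibres: "finite {n. x n = a}"
  shows "a islimpt S"
proof (rule islimptI)
  fix T assume "a \<in> T" "open T"
  have "eventually (\<lambda>n. x n \<noteq> a) sequentially"
    using finite_fibres by (simp add: cofinite_eq_sequentially[symmetric] eventually_cofinite)
  moreover have "eventually (\<lambda>n. x n \<in> T) sequentially"
    using lim \<open>open T\<close> \<open>a \<in> T\<close> by (rule topological_tendstoD)
  ultimately obtain n where "x n \<noteq> a" "x n \<in> T"
    using eventually_happens'[OF sequentially_bot] eventually_conj by blast
  then show "\<exists>y\<in>S. y \<in> T \<and> y \<noteq> a"
    using in_S by blast
qed

lemma islimpt_mult_left:
  fixes c :: "'a::{real_normed_field, first_countable_topology}"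
  assumes "c \<noteq> 0" "a islimpt S"
  shows "c * a islimpt (\<lambda>z. c * z) ` S"
proof (rule islimpt_isCont_image[OF assms(2)])
  show "eventually (\<lambda>z. c * z \<noteq> c * a) (at a)"
    by (rule eventually_mono[OF eventually_neq_at_within]) (use assms(1) in auto)
qed (intro continuous_intros)

lemma islimpt_swap:
  fixes p :: "'a::{first_countable_topology, t2_space} \<times> 'b::{first_countable_topology, t2_space}"
  assumes "p islimpt S"
  shows "prod.swap p islimpt prod.swap ` S"
proof (rule islimpt_isCont_image[OF assms isCont_swap])
  show "eventually (\<lambda>y. prod.swap y \<noteq> prod.swap p) (at p)"
    unfolding eventually_at_filter by (rule always_eventually) (metis swap_swap)
qed

definition cayley :: "complex \<Rightarrow> complex" where
  "cayley s = (\<i> - s) / (\<i> + s)"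

definition cayley_inv :: "complex \<Rightarrow> complex" where
  "cayley_inv w = \<i> * (1 - w) / (1 + w)"

lemma cnj_mult_self_unit: "norm (u :: complex) = 1 \<Longrightarrow> cnj u * u = 1"
  by (metis complex_norm_square mult.commute of_real_1 one_power2)

lemma i_plus_nonzero_if_Im_nonneg: "0 \<le> Im s \<Longrightarrow> \<i> + s \<noteq> 0"
  by (auto simp: complex_eq_iff)

lemma cayley_0 [simp]: "cayley 0 = 1"
  by (simp add: cayley_def)

lemma cayley_inv_1 [simp]: "cayley_inv 1 = 0"
  by (simp add: cayley_inv_def)

lemma cayley_inv_cayley: "\<i> + s \<noteq> 0 \<Longrightarrow> cayley_inv (cayley s) = s"
  by (simp add: cayley_def cayley_inv_def divide_simps)

lemma cayley_cayley_inv: "w \<noteq> -1 \<Longrightarrow> cayley (cayley_inv w) = w"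
  by (simp add: cayley_def cayley_inv_def divide_simps add_eq_0_iff) (simp add: algebra_simps)

lemma cayley_inv_eq_0_iff: "w \<noteq> -1 \<Longrightarrow> cayley_inv w = 0 \<longleftrightarrow> w = 1"
  by (auto simp: cayley_inv_def add_eq_0_iff)

lemma cayley_inv_real:
  assumes "norm w = 1" "w \<noteq> -1"
  shows "cayley_inv w \<in> \<real>"
proof -
  have w0: "w \<noteq> 0" and "1 + w \<noteq> 0"
    using assms by (auto simp: add_eq_0_iff)
  have "cnj w = 1 / w"
    using assms(1) w0 by (metis mult.commute nonzero_divide_eq_eq one_power2 of_real_1 complex_norm_square)
  have "cnj (cayley_inv w) = - \<i> * (1 - cnj w) / (1 + cnj w)"
    by (simp add: cayley_inv_def)
  also have "\<dots> = cayley_inv w"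
    unfolding \<open>cnj w = 1 / w\<close> using w0 \<open>1 + w \<noteq> 0\<close>
    by (simp add: cayley_inv_def divide_simps) (simp add: algebra_simps)
  finally have "cnj (cayley_inv w) = cayley_inv w" .
  then show ?thesis
    by (simp add: Reals_cnj_iff)
qed

lemma norm_cayley:
  assumes "0 \<le> Im s"
  shows "norm (cayley s) \<le> 1" and "0 < Im s \<Longrightarrow> norm (cayley s) < 1"
    and "Im s = 0 \<Longrightarrow> norm (cayley s) = 1"
proof -
  have sq: "norm (\<i> - s) ^ 2 + 4 * Im s = norm (\<i> + s) ^ 2"
    unfolding cmod_power2 by (simp add: power2_eq_square algebra_simps)
  have "norm (\<i> - s) ^ 2 \<le> norm (\<i> + s) ^ 2"
    using sq assms by linarith
  then have "norm (\<i> - s) \<le> norm (\<i> + s)"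
    by (rule power2_le_imp_le) simp
  moreover have "norm (\<i> - s) < norm (\<i> + s)" if "0 < Im s"
  proof (rule power2_less_imp_less)
    show "norm (\<i> - s) ^ 2 < norm (\<i> + s) ^ 2"
      using sq that by linarith
  qed simp
  moreover have "norm (\<i> - s) = norm (\<i> + s)" if "Im s = 0"
  proof (rule power2_eq_imp_eq)
    show "norm (\<i> - s) ^ 2 = norm (\<i> + s) ^ 2"
      using sq that by simp
  qed simp_all
  moreover have "norm (\<i> + s) > 0"
    using i_plus_nonzero_if_Im_nonneg[OF assms] by simp
  ultimately show "norm (cayley s) \<le> 1" "0 < Im s \<Longrightarrow> norm (cayley s) < 1"
      "Im s = 0 \<Longrightarrow> norm (cayley s) = 1"
    by (simp_all add: cayley_def norm_divide divide_le_eq divide_less_eq)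
qed

lemma continuous_on_cayley: "continuous_on {s. 0 \<le> Im s} cayley"
  unfolding cayley_def by (intro continuous_intros) (auto dest: i_plus_nonzero_if_Im_nonneg)

lemma holomorphic_on_cayley: "cayley holomorphic_on {s. 0 \<le> Im s}"
  unfolding cayley_def by (intro holomorphic_intros) (auto dest: i_plus_nonzero_if_Im_nonneg)

lemma continuous_on_cayley_inv: "continuous_on (- {-1}) cayley_inv"
  unfolding cayley_inv_def by (intro continuous_intros) (auto simp: add_eq_0_iff)

lemma holomorphic_on_cayley_inv: "cayley_inv holomorphic_on (- {-1})"
  unfolding cayley_inv_def by (intro holomorphic_intros) (auto simp: add_eq_0_iff)

lemma upper_half_ball_zero_by_reflection:
  fixes K :: "complex \<Rightarrow> complex"
  assumes hol: "K holomorphic_on (ball 0 r \<inter> {s. 0 < Im s})"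
    and cont: "continuous_on (ball 0 r \<inter> {s. 0 \<le> Im s}) K"
    and real: "\<And>x. x \<in> ball 0 r \<Longrightarrow> x \<in> \<real> \<Longrightarrow> K x \<in> \<real>"
    and zeros: "0 islimpt {x \<in> ball 0 r. 0 \<le> Im x \<and> K x = 0}"
    and r: "0 < r" and s: "s \<in> ball 0 r" "0 \<le> Im s"
  shows "K s = 0"
proof -
  define L where "L z = (if 0 \<le> Im z then K z else cnj (K (cnj z)))" for z
  have "L holomorphic_on ball 0 r"
    unfolding L_def by (rule Schwarz_reflection) (use hol cont real in auto)
  then have "L s = 0"
    by (rule analytic_continuation[OF _ open_ball convex_connected[OF convex_ball] _ _ zeros])
       (use r s in \<open>auto simp: L_def\<close>)
  with s show ?thesis
    by (simp add: L_def)
qed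

lemma cayley_half_ball_contains_open:
  assumes "0 < r"
  obtains V where "open V" "V \<noteq> {}" "V \<subseteq> udisc"
    "\<And>w. w \<in> V \<Longrightarrow> \<exists>s\<in>ball 0 r. 0 < Im s \<and> cayley s = w"
proof
  define T where "T = ball 0 r \<inter> {s. 0 < Im s}"
  define V where "V = udisc \<inter> cayley_inv -` T"
  have inv_defined: "w \<noteq> -1" if "w \<in> udisc" for w
    using that by auto
  have "continuous_on udisc cayley_inv"
    unfolding cayley_inv_def by (intro continuous_intros) (auto simp: add_eq_0_iff)
  moreover have "open T"
    unfolding T_def by (intro open_Int open_ball open_halfspace_Im_gt)
  ultimately show "open V"
    unfolding V_def by (simp add: continuous_on_open_vimage Int_commute)
  define s where "s = \<i> * of_real (r / 2)"
  have "s \<in> T" "0 < Im s"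
    using \<open>0 < r\<close> by (simp_all add: s_def T_def norm_mult)
  then have "cayley s \<in> V"
    using norm_cayley(2)[of s] by (simp add: V_def cayley_inv_cayley i_plus_nonzero_if_Im_nonneg)
  then show "V \<noteq> {}"
    by blast
  show "V \<subseteq> udisc"
    by (simp add: V_def)
  show "\<exists>s\<in>ball 0 r. 0 < Im s \<and> cayley s = w" if "w \<in> V" for w
    using that inv_defined by (intro bexI[of _ "cayley_inv w"]) (auto simp: V_def T_def cayley_cayley_inv)
qed

lemma const_on_cayley_half_ball_imp_const:
  fixes f :: "complex \<Rightarrow> complex"
  assumes contf: "continuous_on cudisc f" and holf: "f holomorphic_on udisc" and "0 < r"
    and const: "\<And>s. s \<in> ball 0 r \<Longrightarrow> 0 < Im s \<Longrightarrow> f (cayley s) = c"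
    and z: "z \<in> cudisc"
  shows "f z = c"
proof -
  obtain V where V: "open V" "V \<noteq> {}" "V \<subseteq> udisc"
    and in_image: "\<And>w. w \<in> V \<Longrightarrow> \<exists>s\<in>ball 0 r. 0 < Im s \<and> cayley s = w"
    using cayley_half_ball_contains_open[OF \<open>0 < r\<close>] by blast
  have "f w = c" if "w \<in> udisc" for w
    by (rule analytic_continuation_open[OF V(1) open_ball V(2) convex_connected[OF convex_ball] V(3)
          holf holomorphic_on_const _ that]) (use in_image const in force)
  then show ?thesis
    using continuous_constant_on_closure[of udisc f c z] contf z by (simp add: closure_ball)
qed

lemma cayley_inv_fibre_islimpt:
  assumes limpt: "1 islimpt {z \<in> ucircle. f z = c}" and "0 < r"
  shows "0 islimpt {t \<in> ball 0 r. t \<in> \<real> \<and> f (cayley t) = c}"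
proof -
  \<comment> \<open>The ball around 1 keeps away from the pole -1 of cayley_inv.\<close>
  define A where "A = {z \<in> ucircle. f z = c} \<inter> ball 1 2"
  have "1 islimpt A"
    unfolding A_def by (rule islimpt_Int_eventually[OF limpt eventually_at_in_open']) auto
  moreover have "isCont cayley_inv 1"
    using continuous_on_cayley_inv by (simp add: continuous_on_eq_continuous_at open_Compl)
  moreover have "eventually (\<lambda>w. cayley_inv w \<noteq> cayley_inv 1) (at 1)"
  proof -
    have "eventually (\<lambda>w. w \<in> ball 1 2 \<and> w \<noteq> 1 \<and> w \<in> UNIV) (at 1)"
      by (rule eventually_at_ball') simp
    then show ?thesis
    proof eventually_elim
      case (elim w)
      then have "w \<noteq> -1"
        by (auto simp: dist_norm)
      with elim show ?case
        by (simp add: cayley_inv_eq_0_iff)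
    qed
  qed
  ultimately have "0 islimpt cayley_inv ` A"
    using islimpt_isCont_image by fastforce
  then have "0 islimpt cayley_inv ` A \<inter> ball 0 r"
    by (rule islimpt_Int_eventually[OF _ eventually_at_in_open']) (use \<open>0 < r\<close> in auto)
  then show ?thesis
  proof (rule islimpt_subset, safe)
    fix z assume z: "z \<in> A"
    then have "z \<noteq> -1"
      by (auto simp: A_def dist_norm)
    with z show "cayley_inv z \<in> \<real>" "f (cayley (cayley_inv z)) = c"
      by (auto simp: A_def cayley_inv_real cayley_cayley_inv)
  qed
qed

lemma cayley_pullback_const_by_reflection:
  fixes f :: "complex \<Rightarrow> complex"
  assumes contf: "continuous_on cudisc f" and holf: "f holomorphic_on udisc" and "0 < r"
    and not_minus_1: "\<And>s. s \<in> ball 0 r \<Longrightarrow> 0 \<le> Im s \<Longrightarrow> f (cayley s) \<noteq> -1"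
    and unimodular: "\<And>x. x \<in> ball 0 r \<Longrightarrow> x \<in> \<real> \<Longrightarrow> norm (f (cayley x)) = 1"
    and ones: "0 islimpt {t \<in> ball 0 r. t \<in> \<real> \<and> f (cayley t) = 1}"
    and s: "s \<in> ball 0 r" "0 \<le> Im s"
  shows "f (cayley s) = 1"
proof -
  define H where "H = ball 0 r \<inter> {s. 0 \<le> Im s}"
  define K where "K = (\<lambda>s. cayley_inv (f (cayley s)))"
  have cayley_H: "cayley ` H \<subseteq> cudisc" "(\<lambda>s. f (cayley s)) ` H \<subseteq> - {-1}"
    by (intro image_subsetI; use norm_cayley(1) not_minus_1 in \<open>simp add: H_def\<close>)+
  have "K holomorphic_on ball 0 r \<inter> {s. 0 < Im s}"
  proof -
    have "(f \<circ> cayley) holomorphic_on ball 0 r \<inter> {s. 0 < Im s}"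
      by (rule holomorphic_on_compose_gen[OF holomorphic_on_subset[OF holomorphic_on_cayley] holf])
         (auto simp: norm_cayley(2))
    then have "(cayley_inv \<circ> (f \<circ> cayley)) holomorphic_on ball 0 r \<inter> {s. 0 < Im s}"
      by (rule holomorphic_on_compose_gen[OF _ holomorphic_on_cayley_inv]) (use not_minus_1 in force)
    then show ?thesis
      by (simp add: K_def o_def)
  qed
  moreover have "continuous_on H K"
    unfolding K_def
    by (intro continuous_on_compose2[OF continuous_on_cayley_inv]
        continuous_on_compose2[OF contf] continuous_on_subset[OF continuous_on_cayley])
       (use cayley_H in \<open>auto simp: H_def\<close>)
  moreover have "K x \<in> \<real>" if "x \<in> ball 0 r" "x \<in> \<real>" for x
    unfolding K_def
    by (rule cayley_inv_real[OF unimodular[OF that] not_minus_1])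
       (use that in \<open>auto simp: complex_is_Real_iff\<close>)
  moreover have "0 islimpt {x \<in> ball 0 r. 0 \<le> Im x \<and> K x = 0}"
    by (rule islimpt_subset[OF ones]) (auto simp: K_def complex_is_Real_iff)
  ultimately have "K s = 0"
    using upper_half_ball_zero_by_reflection[of K r s] s \<open>0 < r\<close> by (simp add: H_def)
  then show ?thesis
    using not_minus_1[OF s] by (simp add: K_def cayley_inv_eq_0_iff)
qed

lemma boundary_fibre_accumulating_at_1_imp_const:
  fixes f :: "complex \<Rightarrow> complex"
  assumes contf: "continuous_on cudisc f" and holf: "f holomorphic_on udisc"
    and "0 < \<delta>" and unimodular: "\<And>z. z \<in> ucircle \<Longrightarrow> dist z 1 < \<delta> \<Longrightarrow> norm (f z) = 1"
    and "f 1 = 1" and limpt: "1 islimpt {z \<in> ucircle. f z = 1}"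
    and z: "z \<in> cudisc"
  shows "f z = 1"
proof -
  obtain \<epsilon> where "0 < \<epsilon>" and "\<epsilon> \<le> \<delta>"
    and not_minus_1: "\<And>w. w \<in> cudisc \<Longrightarrow> dist w 1 < \<epsilon> \<Longrightarrow> f w \<noteq> -1"
  proof -
    obtain \<epsilon> where "0 < \<epsilon>" and \<epsilon>: "\<And>w. w \<in> cudisc \<Longrightarrow> dist w 1 < \<epsilon> \<Longrightarrow> dist (f w) 1 < 1"
      using contf \<open>f 1 = 1\<close> unfolding continuous_on_iff by (metis mem_cball_0 norm_one order_refl zero_less_one)
    show thesis
      by (rule that[of "min \<epsilon> \<delta>"]) (use \<open>0 < \<epsilon>\<close> \<open>0 < \<delta>\<close> \<epsilon> in \<open>force simp: dist_norm\<close>)+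
  qed
  obtain r where "0 < r" and near_1: "\<And>s. norm s < r \<Longrightarrow> dist (cayley s) 1 < \<epsilon>"
  proof -
    have "isCont cayley 0"
      unfolding cayley_def by (intro continuous_intros) simp
    then obtain r where "0 < r" and "\<And>s. dist s 0 < r \<Longrightarrow> dist (cayley s) (cayley 0) < \<epsilon>"
      using \<open>0 < \<epsilon>\<close> unfolding continuous_at_eps_delta by blast
    then show thesis
      using that by simp
  qed
  have "f (cayley s) = 1" if "s \<in> ball 0 r" "0 < Im s" for s
  proof (rule cayley_pullback_const_by_reflection[OF contf holf \<open>0 < r\<close>])
    show "f (cayley t) \<noteq> -1" if "t \<in> ball 0 r" "0 \<le> Im t" for t
      using not_minus_1 near_1 norm_cayley(1) that by simp
    show "norm (f (cayley x)) = 1" if "x \<in> ball 0 r" "x \<in> \<real>" for x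
      using unimodular near_1 norm_cayley(3) \<open>\<epsilon> \<le> \<delta>\<close> that by (force simp: complex_is_Real_iff)
  qed (use cayley_inv_fibre_islimpt[OF limpt \<open>0 < r\<close>] that in auto)
  then show ?thesis
    by (rule const_on_cayley_half_ball_imp_const[OF contf holf \<open>0 < r\<close> _ z])
qed

lemma boundary_fibre_accumulating_imp_const:
  fixes f :: "complex \<Rightarrow> complex"
  assumes contf: "continuous_on cudisc f" and holf: "f holomorphic_on udisc"
    and a: "a \<in> ucircle" and "0 < \<delta>"
    and unimodular: "\<And>z. z \<in> ucircle \<Longrightarrow> dist z a < \<delta> \<Longrightarrow> norm (f z) = 1"
    and "f a = \<xi>" and limpt: "a islimpt {z \<in> ucircle. f z = \<xi>}"
    and z: "z \<in> cudisc"
  shows "f z = \<xi>"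
proof -
  have norm_\<xi>: "norm \<xi> = 1"
    using unimodular[OF a] \<open>0 < \<delta>\<close> \<open>f a = \<xi>\<close> by simp
  then have cnj_\<xi>: "cnj \<xi> * \<xi> = 1"
    by (rule cnj_mult_self_unit)
  have cnj_a: "cnj a * a = 1"
    using a by (simp add: cnj_mult_self_unit)
  have rotate_back: "a * (cnj a * w) = w" for w
    by (metis cnj_a mult.assoc mult.commute mult_1)
  have norm_rotate: "norm (a * w) = norm w" for w
    using a by (simp add: norm_mult)
  have dist_rotate: "dist (a * w) a = dist w 1" for w
    using norm_rotate[of "w - 1"] by (simp add: dist_norm algebra_simps)
  define F where "F = (\<lambda>w. cnj \<xi> * f (a * w))"
  have "continuous_on cudisc F"
    unfolding F_def by (intro continuous_intros continuous_on_compose2[OF contf]) (auto simp: norm_rotate)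
  moreover have "F holomorphic_on udisc"
  proof -
    have "(f \<circ> (\<lambda>w. a * w)) holomorphic_on udisc"
      by (rule holomorphic_on_compose_gen[OF _ holf]) (auto intro: holomorphic_intros simp: norm_rotate)
    then show ?thesis
      unfolding F_def by (intro holomorphic_intros) (simp add: o_def)
  qed
  moreover have "norm (F w) = 1" if "w \<in> ucircle" "dist w 1 < \<delta>" for w
    using unimodular[of "a * w"] that norm_\<xi> a by (simp add: F_def norm_mult norm_rotate dist_rotate)
  moreover have "F 1 = 1"
    using \<open>f a = \<xi>\<close> cnj_\<xi> by (simp add: F_def)
  moreover have "1 islimpt {w \<in> ucircle. F w = 1}"
  proof -
    have "cnj a * a islimpt (\<lambda>w. cnj a * w) ` {z \<in> ucircle. f z = \<xi>}"
      using cnj_a by (intro islimpt_mult_left[OF _ limpt]) auto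
    then have "1 islimpt (\<lambda>w. cnj a * w) ` {z \<in> ucircle. f z = \<xi>}"
      unfolding cnj_a .
    then show ?thesis
      by (rule islimpt_subset) (use a cnj_\<xi> in \<open>auto simp: F_def norm_mult rotate_back\<close>)
  qed
  moreover have "cnj a * z \<in> cudisc"
    using z a by (simp add: norm_mult)
  ultimately have "F (cnj a * z) = 1"
    by (rule boundary_fibre_accumulating_at_1_imp_const[OF _ _ \<open>0 < \<delta>\<close>])
  then have "cnj \<xi> * f z = cnj \<xi> * \<xi>"
    by (simp add: F_def rotate_back cnj_\<xi>)
  then show ?thesis
    using cnj_\<xi> by (metis mult_cancel_left mult_zero_left zero_neq_one)
qed

lemma boundary_fibre_sequence_imp_const:
  fixes f g :: "complex \<Rightarrow> complex"
  assumes contf: "continuous_on cudisc f" and contg: "continuous_on cudisc g"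
    and holf: "f holomorphic_on udisc"
    and boundary: "\<forall>z\<in>ucircle. norm (f z) = 1 \<or> norm (g z) = 1"
    and \<zeta>: "\<And>n. \<zeta> n \<in> ucircle" "\<And>n. f (\<zeta> n) = \<xi>"
    and lim: "(\<lambda>n. g (\<zeta> n)) \<longlonglongrightarrow> w" and w: "w \<in> udisc"
    and finite_fibres: "\<And>l. finite {n. \<zeta> n = l}"
    and z: "z \<in> cudisc"
  shows "f z = \<xi>"
proof -
  obtain a r where a: "a \<in> ucircle" and r: "strict_mono r" and lim_a: "(\<zeta> \<circ> r) \<longlonglongrightarrow> a"
    using seq_compactE[OF compact_imp_seq_compact[OF compact_sphere]] \<zeta>(1) by metis
  have \<zeta>_cudisc: "\<forall>n. (\<zeta> \<circ> r) n \<in> cudisc" and "a \<in> cudisc"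
    using \<zeta>(1) a by auto
  have "(f \<circ> (\<zeta> \<circ> r)) \<longlonglongrightarrow> f a"
    using contf[unfolded continuous_on_sequentially] \<zeta>_cudisc \<open>a \<in> cudisc\<close> lim_a by blast
  moreover have "f \<circ> (\<zeta> \<circ> r) = (\<lambda>n. \<xi>)"
    using \<zeta>(2) by (simp add: fun_eq_iff)
  ultimately have "f a = \<xi>"
    using LIMSEQ_unique tendsto_const by metis
  have "(g \<circ> (\<zeta> \<circ> r)) \<longlonglongrightarrow> g a"
    using contg[unfolded continuous_on_sequentially] \<zeta>_cudisc \<open>a \<in> cudisc\<close> lim_a by blast
  moreover have "(g \<circ> (\<zeta> \<circ> r)) \<longlonglongrightarrow> w"
    using LIMSEQ_subseq_LIMSEQ[OF lim r] by (simp add: o_def)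
  ultimately have "g a = w"
    using LIMSEQ_unique by blast
  have fin: "finite {n. (\<zeta> \<circ> r) n = a}"
    using finite_vimageI[OF finite_fibres[of a] strict_mono_imp_inj_on[OF r]] by (simp add: vimage_def)
  have limpt: "a islimpt {z \<in> ucircle. f z = \<xi>}"
    by (rule islimpt_of_tendsto_finite_fibres[OF lim_a _ fin]) (use \<zeta> in auto)
  obtain \<delta> where "0 < \<delta>" and near_w: "\<And>u. u \<in> cudisc \<Longrightarrow> dist u a < \<delta> \<Longrightarrow> dist (g u) w < 1 - norm w"
    using contg \<open>a \<in> cudisc\<close> w \<open>g a = w\<close> unfolding continuous_on_iff by (metis diff_gt_0_iff_gt mem_ball_0)
  have "norm (f u) = 1" if "u \<in> ucircle" "dist u a < \<delta>" for u
  proof -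
    have "norm (g u) < 1"
      using near_w[of u] that norm_triangle_ineq2[of "g u" w] by (simp add: dist_norm)
    then show ?thesis
      using boundary that(1) by auto
  qed
  then show ?thesis
    using boundary_fibre_accumulating_imp_const[OF contf holf a \<open>0 < \<delta>\<close> _ \<open>f a = \<xi>\<close> limpt z] by blast
qed

lemma no_fibre_sequence_with_interior_cluster_point:
  fixes f g :: "complex \<Rightarrow> complex"
  assumes contf: "continuous_on cudisc f" and contg: "continuous_on cudisc g"
    and holf: "f holomorphic_on udisc"
    and boundary: "\<forall>z\<in>ucircle. norm (f z) = 1 \<or> norm (g z) = 1"
    and nonconst: "\<not> (\<exists>c. \<forall>z\<in>cudisc. f z = c)"
  shows "\<not> (\<exists>\<zeta> :: nat \<Rightarrow> complex. inj \<zeta> \<and> (\<forall>n. \<zeta> n \<in> ucircle)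
           \<and> (\<forall>n. f (\<zeta> n) = \<xi>) \<and> (\<exists>w\<in>udisc. seq_cluster_point (\<lambda>n. g (\<zeta> n)) w))"
proof
  assume "\<exists>\<zeta> :: nat \<Rightarrow> complex. inj \<zeta> \<and> (\<forall>n. \<zeta> n \<in> ucircle)
           \<and> (\<forall>n. f (\<zeta> n) = \<xi>) \<and> (\<exists>w\<in>udisc. seq_cluster_point (\<lambda>n. g (\<zeta> n)) w)"
  then obtain \<zeta> :: "nat \<Rightarrow> complex" and w r where \<zeta>: "inj \<zeta>" "\<forall>n. \<zeta> n \<in> ucircle" "\<forall>n. f (\<zeta> n) = \<xi>"
    and w: "w \<in> udisc" and r: "strict_mono r" and lim: "((\<lambda>n. g (\<zeta> n)) \<circ> r) \<longlonglongrightarrow> w"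
    unfolding seq_cluster_point_def by blast
  have "inj (\<zeta> \<circ> r)"
    using \<zeta>(1) strict_mono_imp_inj_on[OF r] by (simp add: inj_compose)
  then have fin: "finite {n. (\<zeta> \<circ> r) n = l}" for l
    using finite_vimageI[of "{l}" "\<zeta> \<circ> r"] by (simp add: vimage_def)
  have lim': "(\<lambda>n. g ((\<zeta> \<circ> r) n)) \<longlonglongrightarrow> w"
    using lim by (simp add: o_def)
  have "f z = \<xi>" if "z \<in> cudisc" for z
    by (rule boundary_fibre_sequence_imp_const[OF contf contg holf boundary _ _ lim' w fin that])
       (use \<zeta> in auto)
  with nonconst show False
    by blast
qed

lemma no_limit_point_in_face:
  fixes f g :: "complex \<Rightarrow> complex"
  assumes contf: "continuous_on cudisc f" and contg: "continuous_on cudisc g"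
    and holf: "f holomorphic_on udisc"
    and boundary: "\<forall>z\<in>ucircle. norm (f z) = 1 \<or> norm (g z) = 1"
    and nonconst: "\<not> (\<exists>c. \<forall>z\<in>cudisc. f z = c)"
    and p: "p \<in> {\<xi>} \<times> udisc"
  shows "\<not> p islimpt ((\<lambda>z. (f z, g z)) ` ucircle \<inter> ({\<xi>} \<times> udisc))"
proof
  assume "p islimpt ((\<lambda>z. (f z, g z)) ` ucircle \<inter> ({\<xi>} \<times> udisc))"
  then obtain y where y: "\<And>n. y n \<in> (\<lambda>z. (f z, g z)) ` ucircle \<inter> ({\<xi>} \<times> udisc) - {p}"
    and lim: "y \<longlonglongrightarrow> p"
    unfolding islimpt_sequential by blast
  have "\<forall>n. \<exists>z. z \<in> ucircle \<and> y n = (f z, g z)"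
    using y by blast
  then obtain \<zeta> where \<zeta>: "\<And>n. \<zeta> n \<in> ucircle" "\<And>n. y n = (f (\<zeta> n), g (\<zeta> n))"
    by metis
  obtain w where w: "w \<in> udisc" "p = (\<xi>, w)"
    using p by blast
  have f_\<zeta>: "f (\<zeta> n) = \<xi>" for n
    using y[of n] \<zeta>(2)[of n] by auto
  have lim_g: "(\<lambda>n. g (\<zeta> n)) \<longlonglongrightarrow> w"
    using tendsto_snd[OF lim] \<zeta>(2) w(2) by simp
  have fin: "finite {n. \<zeta> n = l}" for l
  proof (cases "(f l, g l) = p")
    case True
    then have "{n. \<zeta> n = l} = {}"
      using y \<zeta>(2) by auto
    then show ?thesis
      by simp
  next
    case False
    then have "eventually (\<lambda>n. y n \<noteq> (f l, g l)) sequentially"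
      by (intro tendsto_imp_eventually_ne[OF lim]) auto
    then have "finite {n. y n = (f l, g l)}"
      by (simp add: cofinite_eq_sequentially[symmetric] eventually_cofinite)
    then show ?thesis
      by (rule finite_subset[rotated]) (auto simp: \<zeta>(2))
  qed
  have "f z = \<xi>" if "z \<in> cudisc" for z
    by (rule boundary_fibre_sequence_imp_const[OF contf contg holf boundary \<zeta>(1) f_\<zeta> lim_g w(1) fin that])
  with nonconst show False
    by blast
qed

lemma frontier_bidisc_unimodular:
  assumes "(u, v) \<in> frontier bidisc"
  shows "norm u = 1 \<or> norm v = 1"
proof -
  have "frontier bidisc = cudisc \<times> cudisc - bidisc"
    by (simp add: frontier_def closure_Times interior_Times)
  with assms show ?thesis
    by auto
qed

lemma no_limit_point_in_open_face:
  fixes f g :: "complex \<Rightarrow> complex"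
  assumes contf: "continuous_on cudisc f" and contg: "continuous_on cudisc g"
    and holf: "f holomorphic_on udisc" and holg: "g holomorphic_on udisc"
    and boundary: "\<forall>z\<in>ucircle. norm (f z) = 1 \<or> norm (g z) = 1"
    and fnc: "\<not> (\<exists>c. \<forall>z\<in>cudisc. f z = c)" and gnc: "\<not> (\<exists>c. \<forall>z\<in>cudisc. g z = c)"
    and "open_face P" "p \<in> P"
  shows "\<not> p islimpt ((\<lambda>z. (f z, g z)) ` ucircle \<inter> P)"
proof -
  obtain \<xi> where "P = {\<xi>} \<times> udisc \<or> P = udisc \<times> {\<xi>}"
    using \<open>open_face P\<close> unfolding open_face_def by blast
  then show ?thesis
  proof
    assume P: "P = udisc \<times> {\<xi>}"
    have boundary': "\<forall>z\<in>ucircle. norm (g z) = 1 \<or> norm (f z) = 1"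
      using boundary by auto
    have swap_image: "prod.swap ` ((\<lambda>z. (f z, g z)) ` ucircle \<inter> P)
        = (\<lambda>z. (g z, f z)) ` ucircle \<inter> ({\<xi>} \<times> udisc)"
      unfolding P by (simp add: image_Int image_image product_swap)
    show ?thesis
    proof
      assume "p islimpt ((\<lambda>z. (f z, g z)) ` ucircle \<inter> P)"
      then have "prod.swap p islimpt (\<lambda>z. (g z, f z)) ` ucircle \<inter> ({\<xi>} \<times> udisc)"
        unfolding swap_image[symmetric] by (rule islimpt_swap)
      moreover have "prod.swap p \<in> {\<xi>} \<times> udisc"
        using \<open>p \<in> P\<close> P by auto
      ultimately show False
        using no_limit_point_in_face[OF contg contf holg boundary' gnc] by simp
    qed
  qed (use no_limit_point_in_face[OF contf contg holf boundary fnc] \<open>p \<in> P\<close> in auto)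
qed

theorem mainTheorem2:
  fixes f g :: "complex \<Rightarrow> complex"
  assumes cont: "continuous_on cudisc (\<lambda>z. (f z, g z))"
    and maps: "(\<lambda>z. (f z, g z)) ` cudisc \<subseteq> cudisc \<times> cudisc"
    and holf: "f holomorphic_on udisc"
    and holg: "g holomorphic_on udisc"
    and bdry: "(\<lambda>z. (f z, g z)) ` ucircle \<subseteq> frontier bidisc"
    and fnc: "\<not> (\<exists>c. \<forall>z\<in>cudisc. f z = c)"
    and gnc: "\<not> (\<exists>c. \<forall>z\<in>cudisc. g z = c)"
  shows "(\<forall>\<xi>\<in>ucircle. \<not> (\<exists>\<zeta> :: nat \<Rightarrow> complex. inj \<zeta> \<and> (\<forall>n. \<zeta> n \<in> ucircle)
              \<and> (\<forall>n. f (\<zeta> n) = \<xi>) \<and> (\<exists>w\<in>udisc. seq_cluster_point (\<lambda>n. g (\<zeta> n)) w)))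
    \<and> (\<forall>\<xi>\<in>ucircle. \<not> (\<exists>\<zeta> :: nat \<Rightarrow> complex. inj \<zeta> \<and> (\<forall>n. \<zeta> n \<in> ucircle)
              \<and> (\<forall>n. g (\<zeta> n) = \<xi>) \<and> (\<exists>w\<in>udisc. seq_cluster_point (\<lambda>n. f (\<zeta> n)) w)))
    \<and> (\<forall>P. open_face P \<longrightarrow>
          \<not> (\<exists>p\<in>P. p islimpt ((\<lambda>z. (f z, g z)) ` ucircle \<inter> P)))"
proof -
  have contf: "continuous_on cudisc f" and contg: "continuous_on cudisc g"
    using continuous_on_fst[OF cont] continuous_on_snd[OF cont] by simp_all
  have boundary: "\<forall>z\<in>ucircle. norm (f z) = 1 \<or> norm (g z) = 1"
    using bdry frontier_bidisc_unimodular by blast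
  then have boundary': "\<forall>z\<in>ucircle. norm (g z) = 1 \<or> norm (f z) = 1"
    by auto
  show ?thesis
    by (intro conjI ballI allI impI
        no_fibre_sequence_with_interior_cluster_point[OF contf contg holf boundary fnc]
        no_fibre_sequence_with_interior_cluster_point[OF contg contf holg boundary' gnc])
      (use no_limit_point_in_open_face[OF contf contg holf holg boundary fnc gnc] in blast)
qed

end
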